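(* Let $\mathbf{\Sigma}$ be a cluster pattern of rank $n$ with free coefficients at $t_0$. Then the seed $\Sigma_t$ is coprime for every $t\in\mathbb{T}_n$.
   Context: A semifield is a multiplicative abelian group with a commutative, associative addition $\oplus$ satisfying $(a\oplus b)c=ac\oplus bc$. For formal variables $\mathbf{y}=(y_1,\dots,y_n)$, the universal semifield $\mathbb{Q}_{\mathrm{sf}}(\mathbf{y})$ consists of rational functions expressible as ratios of nonzero polynomials with nonnegative integer coefficients. A seed with coefficients in a semifield $\mathbb{P}$ is $(\mathbf{x},\mathbf{y},B)$ with $\mathbf{x}$ a generating transcendence basis of an ambient field $\mathcal{F}\cong\mathbb{Q}\mathbb{P}(u_1,\dots,u_n)$ over the fraction field $\mathbb{Q}\mathbb{P}$ of the group ring $\mathbb{Z}\mathbb{P}$, $\mathbf{y}\in\mathbb{P}^n$, $B$ an $n\times n$ skew-symmetrizable integer matrix. With $[a]_+=\max(a,0)$ and $\hat y_i=y_i\prod_jx_j^{b_{ji}}$, the mutation $\mu_k$ is: $x'_k=x_k^{-1}\big(\prod_{j}x_j^{[-b_{jk}]_+}\big)\frac{1+\hat y_k}{1\oplus y_k}$, $x'_i=x_i$ ($i\ne k$); $y'_k=y_k^{-1}$, $y'_i=y_iy_k^{[b_{ki}]_+}(1\oplus y_k)^{-b_{ki}}$ ($i\neq k$); $b'_{ij}=-b_{ij}$ if $i=k$ or $j=k$, and $b'_{ij}=b_{ij}+b_{ik}[b_{kj}]_++[-b_{ik}]_+b_{kj}$ otherwise. $\mathbb{T}_n$ is the $n$-regular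 tree with edges labeled $1,\dots,n$, distinct at each vertex. A cluster pattern is $\{\Sigma_t=(\mathbf{x}_t,\mathbf{y}_t,B_t)\}_{t\in\mathbb{T}_n}$ with $\Sigma_{t'}=\mu_k(\Sigma_t)$ whenever $t,t'$ are joined by an edge labeled $k$. It has free coefficients at $t_0$ if its coefficient semifield is $\mathbb{Q}_{\mathrm{sf}}(\mathbf{y})$ and $\mathbf{y}_{t_0}=\mathbf{y}$. For a seed $\Sigma_t$ and $k=1,\dots,n$, let $P_{k;t}=\frac{1}{1\oplus y_{k;t}}\big(y_{k;t}\prod_jx_{j;t}^{[b_{jk;t}]_+}+\prod_jx_{j;t}^{[-b_{jk;t}]_+}\big)\in\mathbb{Z}\mathbb{P}[\mathbf{x}_t]$. The seed $\Sigma_t$ is coprime if $P_{1;t},\dots,P_{n;t}$ are pairwise coprime in $\mathbb{Z}\mathbb{P}[\mathbf{x}_t]$, i.e. any common factor of $P_{i;t}$ and $P_{j;t}$ ($i\ne j$) lies in $\mathbb{Z}\mathbb{P}^{\times}=\{\pm1\}\mathbb{P}$. *)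

theory Defs
  imports Complex_Main "HOL-Library.Poly_Mapping" "HOL-Computational_Algebra.Fraction_Field"
begin

text \<open>Multivariate polynomials over Q in variables y_0,...,y_(n-1) (0-based indices),
  and their fraction field Q(y).\<close>
type_synonym mpq = "(nat \<Rightarrow>\<^sub>0 nat) \<Rightarrow>\<^sub>0 rat"
type_synonym rf = "mpq fract"

definition nnpoly :: "nat \<Rightarrow> mpq \<Rightarrow> bool" where
  "nnpoly n p \<longleftrightarrow> p \<noteq> 0 \<and> (\<forall>m. Poly_Mapping.lookup p m \<in> \<nat>) \<and> (\<forall>m::nat \<Rightarrow>\<^sub>0 nat. m \<in> Poly_Mapping.keys p \<longrightarrow> Poly_Mapping.keys m \<subseteq> {..<n})"

text \<open>The universal semifield: ratios of such polynomials; its multiplication is that of Q(y)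
  and its semifield addition is the ordinary addition of Q(y).\<close>
definition Qsf :: "nat \<Rightarrow> rf set" where
  "Qsf n = {Fract p q | p q. nnpoly n p \<and> nnpoly n q}"

definition yvar :: "nat \<Rightarrow> rf" where
  "yvar i = Fract (Poly_Mapping.single (Poly_Mapping.single i 1) 1) 1"

datatype 'a mkey = MK 'a "nat \<Rightarrow>\<^sub>0 nat"

instantiation mkey :: (comm_monoid_mult) comm_monoid_add
begin
fun plus_mkey :: "'a mkey \<Rightarrow> 'a mkey \<Rightarrow> 'a mkey" where
  "plus_mkey (MK a \<alpha>) (MK b \<beta>) = MK (a * b) (\<alpha> + \<beta>)"
definition zero_mkey :: "'a mkey" where
  "zero_mkey = MK 1 0"
instance
proof
  fix a b c :: "'a mkey"
  show "a + b + c = a + (b + c)"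
    by (cases a; cases b; cases c) (simp_all add: ac_simps)
  show "a + b = b + a"
    by (cases a; cases b) (simp_all add: ac_simps)
  show "0 + a = a"
    by (cases a) (simp_all add: zero_mkey_def)
qed
end

text \<open>Elements of the monoid ring Z[rf x N^n]; an element MK p \<alpha> stands for the group-ring
  element p times the monomial X^\<alpha>.\<close>
type_synonym zpx = "rf mkey \<Rightarrow>\<^sub>0 int"

definition ZPX :: "nat \<Rightarrow> rf set \<Rightarrow> zpx set" where
  "ZPX n P = {f. \<forall>k\<in>Poly_Mapping.keys f. case k of MK a \<alpha> \<Rightarrow> a \<in> P \<and> Poly_Mapping.keys \<alpha> \<subseteq> {..<n}}"

definition ZPunits :: "rf set \<Rightarrow> zpx set" where
  "ZPunits P = {Poly_Mapping.single (MK p 0) c | p c. p \<in> P \<and> (c = 1 \<or> c = -1)}"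

definition rdvd :: "zpx set \<Rightarrow> zpx \<Rightarrow> zpx \<Rightarrow> bool" where
  "rdvd R d a \<longleftrightarrow> (\<exists>e\<in>R. a = d * e)"

definition pos :: "int \<Rightarrow> int" where
  "pos a = max a 0"

definition expv :: "nat \<Rightarrow> (nat \<Rightarrow> nat) \<Rightarrow> nat \<Rightarrow>\<^sub>0 nat" where
  "expv n f = Abs_poly_mapping (\<lambda>j. if j < n then f j else 0)"

definition Ppoly :: "nat \<Rightarrow> (nat \<Rightarrow> rf) \<Rightarrow> (nat \<Rightarrow> nat \<Rightarrow> int) \<Rightarrow> nat \<Rightarrow> zpx" where
  "Ppoly n y B k =
     Poly_Mapping.single (MK (y k / (1 + y k)) (expv n (\<lambda>j. nat (pos (B j k))))) 1
   + Poly_Mapping.single (MK (1 / (1 + y k)) (expv n (\<lambda>j. nat (pos (- B j k))))) 1"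

definition coprime_seed :: "nat \<Rightarrow> rf set \<Rightarrow> (nat \<Rightarrow> rf) \<Rightarrow> (nat \<Rightarrow> nat \<Rightarrow> int) \<Rightarrow> bool" where
  "coprime_seed n P y B \<longleftrightarrow>
     (\<forall>i<n. \<forall>j<n. i \<noteq> j \<longrightarrow>
        (\<forall>d\<in>ZPX n P. rdvd (ZPX n P) d (Ppoly n y B i) \<and> rdvd (ZPX n P) d (Ppoly n y B j)
            \<longrightarrow> d \<in> ZPunits P))"

definition skew_symmetrizable :: "nat \<Rightarrow> (nat \<Rightarrow> nat \<Rightarrow> int) \<Rightarrow> bool" where
  "skew_symmetrizable n B \<longleftrightarrow>
     (\<exists>d :: nat \<Rightarrow> int. (\<forall>i<n. d i > 0) \<and> (\<forall>i<n. \<forall>j<n. d i * B i j = - (d j * B j i)))"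

definition mut_y :: "nat \<Rightarrow> (nat \<Rightarrow> rf) \<Rightarrow> (nat \<Rightarrow> nat \<Rightarrow> int) \<Rightarrow> nat \<Rightarrow> rf" where
  "mut_y k y B = (\<lambda>i. if i = k then inverse (y k)
                      else y i * (y k) powi (pos (B k i)) * (1 + y k) powi (- B k i))"

definition mut_B :: "nat \<Rightarrow> (nat \<Rightarrow> nat \<Rightarrow> int) \<Rightarrow> nat \<Rightarrow> nat \<Rightarrow> int" where
  "mut_B k B = (\<lambda>i j. if i = k \<or> j = k then - B i j
                       else B i j + B i k * pos (B k j) + pos (- B i k) * B k j)"

fun mut_seq :: "(nat \<Rightarrow> rf) \<times> (nat \<Rightarrow> nat \<Rightarrow> int) \<Rightarrow> nat list
                  \<Rightarrow> (nat \<Rightarrow> rf) \<times> (nat \<Rightarrow> nat \<Rightarrow> int)" where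
  "mut_seq s [] = s"
| "mut_seq (y, B) (k # ks) = mut_seq (mut_y k y B, mut_B k B) ks"

end

theory Submission
  imports Defs
begin

text \<open>
  Fix two exchange polynomials \<open>P_i\<close>, \<open>P_j\<close> of the seed at \<open>t\<close>. Mutation of coefficients is an
  involution on positive real points, so there is a positive real point \<open>a\<close> at which \<open>y_{i;t}\<close>
  takes the value 2 and every other \<open>y_{l;t}\<close> the value 1. Evaluation at \<open>a\<close> is a semifield
  homomorphism \<open>Q_sf(y) \<rightarrow> R_{>0}\<close>; it assigns a multiplicative level to the terms of \<open>ZP[X]\<close>.
  The two terms of \<open>P_j\<close> have equal levels, those of \<open>P_i\<close> different ones.
  Ordering \<open>Q(y)\<close> by the sign of the lowest coefficient gives total orders on the terms, compatible
  with multiplication and refining the level, and comparing extreme terms of products shows that a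
  common divisor of \<open>P_i\<close> and \<open>P_j\<close> is homogeneous (because of \<open>P_j\<close>) and then a single term
  (because of \<open>P_i\<close>). Its monomial in \<open>X\<close> divides both monomials of \<open>P_i\<close>, whose supports are
  disjoint, so the divisor lies in \<open>{\<plusminus>1}P\<close>.
\<close>

section \<open>Extreme terms of products\<close>

definition compatible_linorder :: "('k \<Rightarrow> 'k \<Rightarrow> bool) \<Rightarrow> 'k::plus set \<Rightarrow> bool" where
  "compatible_linorder lt K \<longleftrightarrow> transp lt \<and> irreflp lt \<and> totalp lt \<and>
     (\<forall>x\<in>K. \<forall>y\<in>K. \<forall>z\<in>K. lt x y \<longrightarrow> lt (x + z) (y + z))"

definition greatest_wrt :: "('k \<Rightarrow> 'k \<Rightarrow> bool) \<Rightarrow> 'k set \<Rightarrow> 'k \<Rightarrow> bool" where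
  "greatest_wrt lt S m \<longleftrightarrow> m \<in> S \<and> (\<forall>x\<in>S. x \<noteq> m \<longrightarrow> lt x m)"

definition level_lex :: "('k \<Rightarrow> real) \<Rightarrow> ('k \<Rightarrow> 'k \<Rightarrow> bool) \<Rightarrow> 'k \<Rightarrow> 'k \<Rightarrow> bool" where
  "level_lex level lt x y \<longleftrightarrow> level x < level y \<or> level x = level y \<and> lt x y"

lemma compatible_linorderD:
  assumes "compatible_linorder lt K"
  shows "lt x y \<Longrightarrow> lt y z \<Longrightarrow> lt x z" and "\<not> lt x x"
    and "x \<noteq> y \<Longrightarrow> lt x y \<or> lt y x"
    and "x \<in> K \<Longrightarrow> y \<in> K \<Longrightarrow> z \<in> K \<Longrightarrow> lt x y \<Longrightarrow> lt (x + z) (y + z)"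
  using assms unfolding compatible_linorder_def
  by (auto dest: transpD irreflpD totalp_onD)

lemma compatible_linorder_converse:
  "compatible_linorder lt K \<Longrightarrow> compatible_linorder (\<lambda>x y. lt y x) K"
  unfolding compatible_linorder_def transp_def irreflp_def totalp_on_def by auto

lemma compatible_linorder_level_lex:
  fixes level :: "'k::plus \<Rightarrow> real"
  assumes lt: "compatible_linorder lt K"
    and level_add: "\<And>x y. x \<in> K \<Longrightarrow> y \<in> K \<Longrightarrow> level (x + y) = level x * level y"
    and level_pos: "\<And>x. x \<in> K \<Longrightarrow> 0 < level x"
  shows "compatible_linorder (level_lex level lt) K"
proof -
  note lt_props = compatible_linorderD[OF lt]
  have "level (x + z) < level (y + z) \<or> level (x + z) = level (y + z) \<and> lt (x + z) (y + z)"
    if "x \<in> K" "y \<in> K" "z \<in> K" "level x < level y \<or> level x = level y \<and> lt x y" for x y z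
    using that lt_props(4)[of x y z] level_pos[of z] by (auto simp: level_add)
  moreover have "transp (\<lambda>x y. level x < level y \<or> level x = level y \<and> lt x y)"
    unfolding transp_def using lt_props(1) by force
  moreover have "totalp (\<lambda>x y. level x < level y \<or> level x = level y \<and> lt x y)"
    unfolding totalp_on_def using lt_props(3) by force
  ultimately show ?thesis
    unfolding compatible_linorder_def irreflp_def level_lex_def[abs_def] using lt_props(2) by blast
qed

lemma greatest_wrt_exists:
  assumes lt: "compatible_linorder lt K" and "finite S" "S \<noteq> {}"
  shows "\<exists>m. greatest_wrt lt S m"
  using assms(2,3)
proof (induction S rule: finite_ne_induct)
  case (singleton x)
  show ?case by (auto simp: greatest_wrt_def)
next
  case (insert x S)
  then obtain m where m: "greatest_wrt lt S m" by blast
  show ?case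
  proof (cases "lt m x")
    case True
    then have "greatest_wrt lt (insert x S) x"
      using m compatible_linorderD(1)[OF lt] by (auto simp: greatest_wrt_def)
    then show ?thesis ..
  next
    case False
    then have "greatest_wrt lt (insert x S) m"
      using m compatible_linorderD(3)[OF lt, of m x] insert.hyps(2) by (auto simp: greatest_wrt_def)
    then show ?thesis ..
  qed
qed

lemma poly_mapping_sum_single:
  "p = (\<Sum>m\<in>Poly_Mapping.keys p. Poly_Mapping.single m (Poly_Mapping.lookup p m))"
  by (rule poly_mapping_eqI)
    (auto simp: lookup_sum lookup_single when_def in_keys_iff intro: sum.neutral)

lemma mult_eq_sum_single:
  fixes p q :: "'k::comm_monoid_add \<Rightarrow>\<^sub>0 'v::comm_semiring_0"
  shows "p * q = (\<Sum>a\<in>Poly_Mapping.keys p. \<Sum>b\<in>Poly_Mapping.keys q.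
    Poly_Mapping.single (a + b) (Poly_Mapping.lookup p a * Poly_Mapping.lookup q b))"
  by (subst (1 2) poly_mapping_sum_single) (simp add: sum_product mult_single)

lemma lookup_mult_sum_keys:
  fixes p q :: "'k::comm_monoid_add \<Rightarrow>\<^sub>0 'v::comm_semiring_0"
  shows "Poly_Mapping.lookup (p * q) k = (\<Sum>a\<in>Poly_Mapping.keys p. \<Sum>b\<in>Poly_Mapping.keys q.
    Poly_Mapping.lookup p a * Poly_Mapping.lookup q b when a + b = k)"
  by (subst mult_eq_sum_single) (simp add: lookup_sum lookup_single)

lemma lookup_mult_greatest:
  fixes f g :: "'k::comm_monoid_add \<Rightarrow>\<^sub>0 'v::comm_semiring_0"
  assumes lt: "compatible_linorder lt K"
    and keys_K: "Poly_Mapping.keys f \<subseteq> K" "Poly_Mapping.keys g \<subseteq> K"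
    and m: "greatest_wrt lt (Poly_Mapping.keys f) m" and m': "greatest_wrt lt (Poly_Mapping.keys g) m'"
  shows "Poly_Mapping.lookup (f * g) (m + m') = Poly_Mapping.lookup f m * Poly_Mapping.lookup g m'"
    and "k \<in> Poly_Mapping.keys (f * g) \<Longrightarrow> k \<noteq> m + m' \<Longrightarrow> lt k (m + m')"
proof -
  note lt_props = compatible_linorderD[OF lt]
  have sum_lt: "lt (a + b) (m + m')"
    if "a \<in> Poly_Mapping.keys f" "b \<in> Poly_Mapping.keys g" "(a, b) \<noteq> (m, m')" for a b
  proof -
    have in_K: "a \<in> K" "b \<in> K" "m \<in> K" "m' \<in> K"
      using that keys_K m m' by (auto simp: greatest_wrt_def)
    have right: "lt (m + b) (m + m')" if "b \<noteq> m'"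
      using m' \<open>b \<in> Poly_Mapping.keys g\<close> that lt_props(4)[of b m' m] in_K
      unfolding greatest_wrt_def by (simp add: add.commute)
    show ?thesis
    proof (cases "a = m")
      case True
      then show ?thesis using right that(3) by simp
    next
      case False
      then have "lt (a + b) (m + b)"
        using m that(1) lt_props(4) in_K unfolding greatest_wrt_def by blast
      then show ?thesis using right lt_props(1) by (cases "b = m'") blast+
    qed
  qed
  have "(Poly_Mapping.lookup f a * Poly_Mapping.lookup g b when a + b = m + m') =
      (Poly_Mapping.lookup f a * Poly_Mapping.lookup g b when a = m when b = m')"
    if "a \<in> Poly_Mapping.keys f" "b \<in> Poly_Mapping.keys g" for a b
    using sum_lt[OF that] lt_props(2) by (auto simp: when_def)
  then show "Poly_Mapping.lookup (f * g) (m + m') = Poly_Mapping.lookup f m * Poly_Mapping.lookup g m'"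
    using m m' unfolding greatest_wrt_def
    by (simp add: lookup_mult_sum_keys cong: sum.cong) (simp add: when_def)
  assume "k \<in> Poly_Mapping.keys (f * g)" "k \<noteq> m + m'"
  then show "lt k (m + m')" using keys_mult sum_lt by blast
qed

lemma greatest_wrt_keys_mult:
  fixes f g :: "'k::comm_monoid_add \<Rightarrow>\<^sub>0 'v::{comm_semiring_0, semiring_no_zero_divisors}"
  assumes "compatible_linorder lt K" "Poly_Mapping.keys f \<subseteq> K" "Poly_Mapping.keys g \<subseteq> K"
    and "greatest_wrt lt (Poly_Mapping.keys f) m" "greatest_wrt lt (Poly_Mapping.keys g) m'"
  shows "greatest_wrt lt (Poly_Mapping.keys (f * g)) (m + m')"
proof -
  have "Poly_Mapping.lookup (f * g) (m + m') \<noteq> 0"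
    using lookup_mult_greatest(1)[OF assms] assms(4,5) by (simp add: greatest_wrt_def in_keys_iff)
  then show ?thesis
    using lookup_mult_greatest(2)[OF assms] by (simp add: greatest_wrt_def in_keys_iff)
qed

section \<open>Polynomials under the lexicographic order form an ordered domain\<close>

lemma compatible_linorder_less:
  "compatible_linorder (<) (UNIV :: 'k::{ordered_cancel_comm_monoid_add, linorder} set)"
  unfolding compatible_linorder_def transp_def irreflp_def totalp_on_def
  by (auto simp: add_strict_right_mono)

lemma greatest_wrt_greater_Min:
  fixes S :: "'k::linorder set"
  assumes "finite S" "S \<noteq> {}"
  shows "greatest_wrt (\<lambda>x y. y < x) S (Min S)"
  using assms Min_le[OF assms(1)] by (auto simp: greatest_wrt_def order.order_iff_strict)

lemma poly_mapping_pos_iff_lowest_coeff: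
  fixes p :: "'k::linorder \<Rightarrow>\<^sub>0 'v::linordered_idom"
  assumes "p \<noteq> 0"
  shows "0 < p \<longleftrightarrow> 0 < Poly_Mapping.lookup p (Min (Poly_Mapping.keys p))"
proof -
  define m where "m = Min (Poly_Mapping.keys p)"
  have m: "m \<in> Poly_Mapping.keys p" "\<And>k. k < m \<Longrightarrow> Poly_Mapping.lookup p k = 0"
    using assms Min_in[of "Poly_Mapping.keys p"] Min_le[of "Poly_Mapping.keys p"]
    by (auto simp: m_def in_keys_iff leD)
  have "0 < p \<longleftrightarrow> (\<exists>k. 0 < Poly_Mapping.lookup p k \<and> (\<forall>k'<k. Poly_Mapping.lookup p k' = 0))"
    unfolding less_poly_mapping.rep_eq less_fun_def by simp
  also have "\<dots> \<longleftrightarrow> 0 < Poly_Mapping.lookup p m"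
    using m by (metis in_keys_iff linorder_neqE less_irrefl)
  finally show ?thesis by (simp add: m_def)
qed

lemma poly_mapping_mult_pos:
  fixes p q :: "'k::{ordered_cancel_comm_monoid_add, linorder} \<Rightarrow>\<^sub>0 'v::linordered_idom"
  assumes "0 < p" "0 < q"
  shows "0 < p * q"
proof -
  define m where "m = Min (Poly_Mapping.keys p)"
  define m' where "m' = Min (Poly_Mapping.keys q)"
  have greater: "compatible_linorder (\<lambda>x y. y < x) (UNIV :: 'k set)"
    by (rule compatible_linorder_converse[OF compatible_linorder_less])
  have p_q_nz: "p \<noteq> 0" "q \<noteq> 0" using assms by auto
  have lowest: "greatest_wrt (\<lambda>x y. y < x) (Poly_Mapping.keys p) m"
    "greatest_wrt (\<lambda>x y. y < x) (Poly_Mapping.keys q) m'"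
    using p_q_nz by (simp_all add: m_def m'_def greatest_wrt_greater_Min)
  have lookup_pq: "Poly_Mapping.lookup (p * q) (m + m') = Poly_Mapping.lookup p m * Poly_Mapping.lookup q m'"
    by (rule lookup_mult_greatest(1)[OF greater _ _ lowest]) simp_all
  have "0 < Poly_Mapping.lookup p m" "0 < Poly_Mapping.lookup q m'"
    using assms p_q_nz poly_mapping_pos_iff_lowest_coeff m_def m'_def by blast+
  then have pos: "0 < Poly_Mapping.lookup (p * q) (m + m')"
    by (simp add: lookup_pq)
  then have "p * q \<noteq> 0" by auto
  moreover have "Min (Poly_Mapping.keys (p * q)) = m + m'"
    using pos lookup_mult_greatest(2)[OF greater _ _ lowest]
    by (intro Min_eqI) (auto simp: in_keys_iff order.order_iff_strict)
  ultimately show ?thesis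
    using pos poly_mapping_pos_iff_lowest_coeff by metis
qed

instantiation poly_mapping :: ("{ordered_cancel_comm_monoid_add, linorder}", linordered_idom) linordered_idom
begin

definition abs_poly_mapping :: "('a \<Rightarrow>\<^sub>0 'b) \<Rightarrow> 'a \<Rightarrow>\<^sub>0 'b" where
  "abs_poly_mapping p = (if p < 0 then - p else p)"

definition sgn_poly_mapping :: "('a \<Rightarrow>\<^sub>0 'b) \<Rightarrow> 'a \<Rightarrow>\<^sub>0 'b" where
  "sgn_poly_mapping p = (if p = 0 then 0 else if 0 < p then 1 else - 1)"

instance
proof
  fix a b c :: "'a \<Rightarrow>\<^sub>0 'b"
  assume "a < b" "0 < c"
  then have "0 < c * (b - a)"
    by (simp add: poly_mapping_mult_pos)
  then show "c * a < c * b"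
    by (simp add: right_diff_distrib)
qed (simp_all add: abs_poly_mapping_def sgn_poly_mapping_def)

end

section \<open>Common divisors of binomials\<close>

lemma level_le_greatest_wrt_level_lex:
  assumes "greatest_wrt (level_lex level lt) S m" "x \<in> S"
  shows "level x \<le> level m"
  using assms unfolding greatest_wrt_def level_lex_def by (cases "x = m") auto

lemma greatest_wrt_level_lex_same_level:
  assumes "greatest_wrt (level_lex level lt) S m" "x \<in> S" "level x = level m"
  shows "x = m \<or> lt x m"
  using assms unfolding greatest_wrt_def level_lex_def by auto

lemma greatest_wrt_level_lex_top_level:
  assumes "greatest_wrt (level_lex level lt) S s" "k \<in> S"
    and "\<And>k'. k' \<in> S \<Longrightarrow> k' \<noteq> k \<Longrightarrow> level k' < level k"
  shows "s = k"
proof (rule ccontr)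
  assume "s \<noteq> k"
  then have "level s < level k"
    using assms unfolding greatest_wrt_def by blast
  moreover have "level k \<le> level s"
    using level_le_greatest_wrt_level_lex[OF assms(1,2)] .
  ultimately show False by simp
qed

lemma level_constant_on_keys_of_factor:
  fixes d e :: "'k::comm_monoid_add \<Rightarrow>\<^sub>0 'v::idom" and level :: "'k \<Rightarrow> real"
  assumes lt: "compatible_linorder lt K"
    and level_add: "\<And>x y. x \<in> K \<Longrightarrow> y \<in> K \<Longrightarrow> level (x + y) = level x * level y"
    and level_pos: "\<And>x. x \<in> K \<Longrightarrow> 0 < level x"
    and keys_K: "Poly_Mapping.keys d \<subseteq> K" "Poly_Mapping.keys e \<subseteq> K"
    and "d * e \<noteq> 0"
    and level_const: "\<And>k k'. k \<in> Poly_Mapping.keys (d * e) \<Longrightarrow> k' \<in> Poly_Mapping.keys (d * e) \<Longrightarrow>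
      level k = level k'"
    and x: "x \<in> Poly_Mapping.keys d" and x': "x' \<in> Poly_Mapping.keys d"
  shows "level x = level x'"
proof -
  define up where "up = level_lex level lt"
  define down where "down = (\<lambda>x y. up y x)"
  have up: "compatible_linorder up K"
    unfolding up_def by (rule compatible_linorder_level_lex[where level = level, OF lt level_add level_pos])
  have down: "compatible_linorder down K"
    unfolding down_def by (rule compatible_linorder_converse[OF up])
  have keys_ne: "Poly_Mapping.keys d \<noteq> {}" "Poly_Mapping.keys e \<noteq> {}"
    using \<open>d * e \<noteq> 0\<close> by auto
  obtain M M' m m' where
    M: "greatest_wrt up (Poly_Mapping.keys d) M" and M': "greatest_wrt up (Poly_Mapping.keys e) M'" and
    m: "greatest_wrt down (Poly_Mapping.keys d) m" and m': "greatest_wrt down (Poly_Mapping.keys e) m'"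
    using greatest_wrt_exists[OF up finite_keys keys_ne(1)] greatest_wrt_exists[OF up finite_keys keys_ne(2)]
      greatest_wrt_exists[OF down finite_keys keys_ne(1)] greatest_wrt_exists[OF down finite_keys keys_ne(2)]
    by blast
  have in_K: "M \<in> K" "M' \<in> K" "m \<in> K" "m' \<in> K"
    using M M' m m' keys_K by (auto simp: greatest_wrt_def)
  txt \<open>\<open>M + M'\<close> and \<open>m + m'\<close> are terms of the homogeneous product, and every level of \<open>d\<close>
    lies between those of \<open>m\<close> and \<open>M\<close>.\<close>
  have "level (M + M') = level (m + m')"
    using greatest_wrt_keys_mult[OF up keys_K M M'] greatest_wrt_keys_mult[OF down keys_K m m']
    unfolding greatest_wrt_def by (blast intro: level_const)
  then have products: "level M * level M' = level m * level m'"
    by (simp add: level_add in_K)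
  have below: "level m \<le> level y" "level y \<le> level M" if "y \<in> Poly_Mapping.keys d" for y
  proof -
    show "level m \<le> level y"
    proof (cases "y = m")
      case False
      then have "level_lex level lt m y"
        using m that by (simp add: greatest_wrt_def down_def up_def)
      then show ?thesis by (auto simp: level_lex_def)
    qed simp
    show "level y \<le> level M"
      using level_le_greatest_wrt_level_lex[OF M[unfolded up_def] that] .
  qed
  have "level m' \<le> level M'"
    using level_le_greatest_wrt_level_lex[OF M'[unfolded up_def]] m' by (simp add: greatest_wrt_def)
  have "level m = level M"
  proof (rule ccontr)
    assume "level m \<noteq> level M"
    then have "level m * level m' < level M * level m'"
      using below[OF x] level_pos[OF in_K(4)] by simp
    also have "\<dots> \<le> level M * level M'"
      using \<open>level m' \<le> level M'\<close> level_pos[OF in_K(1)] by simp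
    finally show False using products by simp
  qed
  then show ?thesis using below[OF x] below[OF x'] by simp
qed

lemma keys_eq_singleton_imp_single:
  "Poly_Mapping.keys p = {x} \<Longrightarrow> p = Poly_Mapping.single x (Poly_Mapping.lookup p x)"
  by (rule poly_mapping_eqI) (auto simp: lookup_single when_def in_keys_iff)

lemma factor_monomial_if_unique_top_level_key:
  fixes d e :: "'k::comm_monoid_add \<Rightarrow>\<^sub>0 'v::idom" and level :: "'k \<Rightarrow> real"
  assumes lt: "compatible_linorder lt K"
    and level_add: "\<And>x y. x \<in> K \<Longrightarrow> y \<in> K \<Longrightarrow> level (x + y) = level x * level y"
    and level_pos: "\<And>x. x \<in> K \<Longrightarrow> 0 < level x"
    and keys_K: "Poly_Mapping.keys d \<subseteq> K" "Poly_Mapping.keys e \<subseteq> K"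
    and level_const: "\<And>x x'. x \<in> Poly_Mapping.keys d \<Longrightarrow> x' \<in> Poly_Mapping.keys d \<Longrightarrow>
      level x = level x'"
    and k: "k \<in> Poly_Mapping.keys (d * e)"
    and top: "\<And>k'. k' \<in> Poly_Mapping.keys (d * e) \<Longrightarrow> k' \<noteq> k \<Longrightarrow> level k' < level k"
  obtains x c where "d = Poly_Mapping.single x c" "c dvd Poly_Mapping.lookup (d * e) k"
proof -
  define gt where "gt = (\<lambda>x y. lt y x)"
  note lt_props = compatible_linorderD[OF lt]
  have up: "compatible_linorder (level_lex level lt) K"
    by (rule compatible_linorder_level_lex[where level = level, OF lt level_add level_pos])
  have up': "compatible_linorder (level_lex level gt) K"
    unfolding gt_def by (rule compatible_linorder_level_lex[where level = level, OF compatible_linorder_converse[OF lt] level_add level_pos])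
  have keys_ne: "Poly_Mapping.keys d \<noteq> {}" "Poly_Mapping.keys e \<noteq> {}"
    using k by auto
  txt \<open>\<open>d\<close> is homogeneous, so \<open>X1\<close> and \<open>X2\<close> are its \<open>lt\<close>-largest and \<open>lt\<close>-smallest terms; both
    \<open>X1 + E1\<close> and \<open>X2 + E2\<close> are the unique top-level term \<open>k\<close>, which forces \<open>X1 = X2\<close>.\<close>
  obtain X1 E1 X2 E2 where
    X1: "greatest_wrt (level_lex level lt) (Poly_Mapping.keys d) X1" and
    E1: "greatest_wrt (level_lex level lt) (Poly_Mapping.keys e) E1" and
    X2: "greatest_wrt (level_lex level gt) (Poly_Mapping.keys d) X2" and
    E2: "greatest_wrt (level_lex level gt) (Poly_Mapping.keys e) E2"
    using greatest_wrt_exists[OF up finite_keys keys_ne(1)] greatest_wrt_exists[OF up finite_keys keys_ne(2)]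
      greatest_wrt_exists[OF up' finite_keys keys_ne(1)] greatest_wrt_exists[OF up' finite_keys keys_ne(2)]
    by blast
  have in_keys: "X1 \<in> Poly_Mapping.keys d" "E1 \<in> Poly_Mapping.keys e"
    "X2 \<in> Poly_Mapping.keys d" "E2 \<in> Poly_Mapping.keys e"
    using X1 E1 X2 E2 by (simp_all add: greatest_wrt_def)
  then have in_K: "X1 \<in> K" "E1 \<in> K" "X2 \<in> K" "E2 \<in> K"
    using keys_K by auto
  have X1E1: "X1 + E1 = k" and X2E2: "X2 + E2 = k"
    using greatest_wrt_level_lex_top_level[OF greatest_wrt_keys_mult[OF up keys_K X1 E1] k top]
      greatest_wrt_level_lex_top_level[OF greatest_wrt_keys_mult[OF up' keys_K X2 E2] k top] by simp_all
  then have "level X1 * level E1 = level X1 * level E2"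
    using level_const[OF in_keys(1,3)] level_add in_K by metis
  then have "level E2 = level E1"
    using level_pos[OF in_K(1)] by simp
  then have E2_E1: "E2 = E1 \<or> lt E2 E1"
    using greatest_wrt_level_lex_same_level[OF E1 in_keys(4)] by simp
  have X1_top: "x = X1 \<or> lt x X1" and X2_bottom: "x = X2 \<or> lt X2 x" if "x \<in> Poly_Mapping.keys d" for x
    using greatest_wrt_level_lex_same_level[OF X1 that level_const[OF that in_keys(1)]]
      greatest_wrt_level_lex_same_level[OF X2 that level_const[OF that in_keys(3)]]
    by (auto simp: gt_def)
  have "X1 = X2"
  proof (rule ccontr)
    assume "X1 \<noteq> X2"
    then have "lt (X2 + E2) (X1 + E2)"
      using X1_top[OF in_keys(3)] lt_props(4) in_K by blast
    moreover have "X1 + E2 = X1 + E1 \<or> lt (X1 + E2) (X1 + E1)"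
      using E2_E1 lt_props(4)[of E2 E1 X1] in_K by (auto simp: add.commute)
    ultimately have "lt k k"
      using X1E1 X2E2 lt_props(1)[of k "X1 + E2" k] by auto
    then show False
      using lt_props(2) by blast
  qed
  then have "Poly_Mapping.keys d = {X1}"
  proof (intro equalityI subsetI)
    fix x assume "x \<in> Poly_Mapping.keys d"
    then show "x \<in> {X1}"
      using X1_top X2_bottom \<open>X1 = X2\<close> lt_props(1)[of x X1 x] lt_props(2)[of x] by auto
  qed (use in_keys(1) in simp)
  then have "d = Poly_Mapping.single X1 (Poly_Mapping.lookup d X1)"
    by (rule keys_eq_singleton_imp_single)
  moreover have "Poly_Mapping.lookup d X1 dvd Poly_Mapping.lookup (d * e) k"
    using lookup_mult_greatest(1)[OF up keys_K X1 E1] X1E1 by simp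
  ultimately show ?thesis by (rule that)
qed

section \<open>The universal semifield and its evaluation at positive points\<close>

lemma sum_in_Nats: "(\<And>x. x \<in> A \<Longrightarrow> f x \<in> \<nat>) \<Longrightarrow> sum f A \<in> \<nat>"
  by (induction A rule: infinite_finite_induct) auto

lemma nnpoly_one: "nnpoly n 1"
  by (auto simp: nnpoly_def lookup_one when_def)

lemma nnpoly_var: "l < n \<Longrightarrow> nnpoly n (Poly_Mapping.single (Poly_Mapping.single l 1) 1)"
  unfolding nnpoly_def by (auto simp: lookup_single when_def simp flip: keys_eq_empty)

lemma nnpoly_nonneg_coeff: "nnpoly n p \<Longrightarrow> 0 \<le> Poly_Mapping.lookup p m"
  unfolding nnpoly_def by (metis Nats_cases of_nat_0_le_iff)

lemma nnpoly_add: assumes "nnpoly n p" "nnpoly n q" shows "nnpoly n (p + q)"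
  unfolding nnpoly_def
proof (intro conjI allI impI)
  obtain m where m: "m \<in> Poly_Mapping.keys p"
    using assms(1) unfolding nnpoly_def by (metis keys_eq_empty ex_in_conv)
  then have "Poly_Mapping.lookup (p + q) m \<noteq> 0"
    using nnpoly_nonneg_coeff[OF assms(1), of m] nnpoly_nonneg_coeff[OF assms(2), of m]
    by (simp add: lookup_add in_keys_iff)
  then show "p + q \<noteq> 0" by auto
  show "Poly_Mapping.lookup (p + q) m \<in> \<nat>" for m
    using assms by (simp add: nnpoly_def lookup_add)
  show "Poly_Mapping.keys m \<subseteq> {..<n}" if "m \<in> Poly_Mapping.keys (p + q)" for m
    using that keys_add[of p q] assms unfolding nnpoly_def by blast
qed

lemma nnpoly_mult: assumes "nnpoly n p" "nnpoly n q" shows "nnpoly n (p * q)"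
  unfolding nnpoly_def
proof (intro conjI allI impI)
  show "p * q \<noteq> 0" using assms by (simp add: nnpoly_def)
  show "Poly_Mapping.lookup (p * q) m \<in> \<nat>" for m
    unfolding lookup_mult_sum_keys using assms
    by (intro sum_in_Nats) (auto simp: when_def nnpoly_def)
  show "Poly_Mapping.keys m \<subseteq> {..<n}" if m: "m \<in> Poly_Mapping.keys (p * q)" for m
  proof -
    obtain a b where "m = a + b" "a \<in> Poly_Mapping.keys p" "b \<in> Poly_Mapping.keys q"
      using m keys_mult[of p q] by blast
    then show ?thesis
      using keys_add[of a b] assms unfolding nnpoly_def by blast
  qed
qed

lemma nnpoly_pos:
  assumes "nnpoly n p" shows "0 < p"
proof -
  have "p \<noteq> 0" using assms by (simp add: nnpoly_def)
  then have "Poly_Mapping.lookup p (Min (Poly_Mapping.keys p)) \<noteq> 0"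
    by (simp add: in_keys_iff[symmetric])
  then show ?thesis
    using nnpoly_nonneg_coeff[OF assms, of "Min (Poly_Mapping.keys p)"]
      poly_mapping_pos_iff_lowest_coeff[OF \<open>p \<noteq> 0\<close>] by simp
qed

lemma Qsf_cases:
  assumes "x \<in> Qsf n"
  obtains p q where "nnpoly n p" "nnpoly n q" "x = Fract p q"
  using assms by (auto simp: Qsf_def)

lemma Fract_in_Qsf: "nnpoly n p \<Longrightarrow> nnpoly n q \<Longrightarrow> Fract p q \<in> Qsf n"
  by (auto simp: Qsf_def)

lemma Qsf_one: "1 \<in> Qsf n"
  by (simp add: One_fract_def Fract_in_Qsf nnpoly_one)

lemma yvar_in_Qsf: "l < n \<Longrightarrow> yvar l \<in> Qsf n"
  unfolding yvar_def by (rule Fract_in_Qsf[OF nnpoly_var nnpoly_one])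

lemma Qsf_mult: "x \<in> Qsf n \<Longrightarrow> y \<in> Qsf n \<Longrightarrow> x * y \<in> Qsf n"
  by (elim Qsf_cases) (simp add: Fract_in_Qsf nnpoly_mult)

lemma Qsf_add: "x \<in> Qsf n \<Longrightarrow> y \<in> Qsf n \<Longrightarrow> x + y \<in> Qsf n"
  by (elim Qsf_cases) (simp add: Fract_in_Qsf nnpoly_mult nnpoly_add nnpoly_pos less_imp_neq[symmetric])

lemma Qsf_inverse: "x \<in> Qsf n \<Longrightarrow> inverse x \<in> Qsf n"
  by (elim Qsf_cases) (simp add: Fract_in_Qsf)

lemma Qsf_pos: "x \<in> Qsf n \<Longrightarrow> 0 < x"
  by (elim Qsf_cases) (simp add: zero_less_Fract_iff nnpoly_pos)

definition monomial_eval :: "(nat \<Rightarrow> 'a::comm_semiring_1) \<Rightarrow> (nat \<Rightarrow>\<^sub>0 nat) \<Rightarrow> 'a" where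
  "monomial_eval a m = (\<Prod>l\<in>Poly_Mapping.keys m. a l ^ Poly_Mapping.lookup m l)"

definition mpoly_eval :: "(nat \<Rightarrow> 'a::field_char_0) \<Rightarrow> mpq \<Rightarrow> 'a" where
  "mpoly_eval a p = (\<Sum>m\<in>Poly_Mapping.keys p. of_rat (Poly_Mapping.lookup p m) * monomial_eval a m)"

lemma monomial_eval_superset:
  "finite S \<Longrightarrow> Poly_Mapping.keys m \<subseteq> S \<Longrightarrow>
    monomial_eval a m = (\<Prod>l\<in>S. a l ^ Poly_Mapping.lookup m l)"
  unfolding monomial_eval_def by (rule prod.mono_neutral_left) (auto simp: in_keys_iff)

lemma monomial_eval_add: "monomial_eval a (m + m') = monomial_eval a m * monomial_eval a m'"
proof -
  let ?S = "Poly_Mapping.keys m \<union> Poly_Mapping.keys m'"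
  have "monomial_eval a (m + m') = (\<Prod>l\<in>?S. a l ^ Poly_Mapping.lookup (m + m') l)"
    using keys_add[of m m'] by (intro monomial_eval_superset) auto
  also have "\<dots> = (\<Prod>l\<in>?S. a l ^ Poly_Mapping.lookup m l) * (\<Prod>l\<in>?S. a l ^ Poly_Mapping.lookup m' l)"
    by (simp add: lookup_add power_add prod.distrib)
  also have "\<dots> = monomial_eval a m * monomial_eval a m'"
    using monomial_eval_superset[of ?S m a] monomial_eval_superset[of ?S m' a] by simp
  finally show ?thesis .
qed

lemma mpoly_eval_superset:
  "finite S \<Longrightarrow> Poly_Mapping.keys p \<subseteq> S \<Longrightarrow>
    mpoly_eval a p = (\<Sum>m\<in>S. of_rat (Poly_Mapping.lookup p m) * monomial_eval a m)"
  unfolding mpoly_eval_def by (rule sum.mono_neutral_left) (auto simp: in_keys_iff)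

lemma mpoly_eval_add: "mpoly_eval a (p + q) = mpoly_eval a p + mpoly_eval a q"
proof -
  let ?S = "Poly_Mapping.keys p \<union> Poly_Mapping.keys q"
  have "mpoly_eval a (p + q) = (\<Sum>m\<in>?S. of_rat (Poly_Mapping.lookup (p + q) m) * monomial_eval a m)"
    using keys_add[of p q] by (intro mpoly_eval_superset) auto
  also have "\<dots> = mpoly_eval a p + mpoly_eval a q"
    using mpoly_eval_superset[of ?S p a] mpoly_eval_superset[of ?S q a]
    by (simp add: lookup_add of_rat_add distrib_right sum.distrib)
  finally show ?thesis .
qed

lemma mpoly_eval_zero: "mpoly_eval a 0 = 0"
  by (simp add: mpoly_eval_def)

lemma mpoly_eval_sum: "mpoly_eval a (\<Sum>i\<in>I. f i) = (\<Sum>i\<in>I. mpoly_eval a (f i))"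
  by (induction I rule: infinite_finite_induct) (simp_all add: mpoly_eval_zero mpoly_eval_add)

lemma mpoly_eval_single: "mpoly_eval a (Poly_Mapping.single m c) = of_rat c * monomial_eval a m"
  by (simp add: mpoly_eval_superset[of "{m}"])

lemma mpoly_eval_one: "mpoly_eval a 1 = 1"
  using mpoly_eval_single[of a 0 1] by (simp add: monomial_eval_def)

lemma mpoly_eval_mult: "mpoly_eval a (p * q) = mpoly_eval a p * mpoly_eval a q"
proof -
  have "mpoly_eval a (p * q) = (\<Sum>x\<in>Poly_Mapping.keys p. \<Sum>y\<in>Poly_Mapping.keys q.
      of_rat (Poly_Mapping.lookup p x * Poly_Mapping.lookup q y) * monomial_eval a (x + y))"
    by (subst mult_eq_sum_single) (simp add: mpoly_eval_sum mpoly_eval_single)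
  also have "\<dots> = (\<Sum>x\<in>Poly_Mapping.keys p. \<Sum>y\<in>Poly_Mapping.keys q.
      (of_rat (Poly_Mapping.lookup p x) * monomial_eval a x) *
      (of_rat (Poly_Mapping.lookup q y) * monomial_eval a y))"
    by (simp add: of_rat_mult monomial_eval_add mult_ac)
  also have "\<dots> = mpoly_eval a p * mpoly_eval a q"
    unfolding mpoly_eval_def by (simp only: sum_product)
  finally show ?thesis .
qed

lemma mpoly_eval_pos:
  fixes a :: "nat \<Rightarrow> 'a::linordered_field"
  assumes "\<And>l. 0 < a l" "nnpoly n p"
  shows "0 < mpoly_eval a p"
  unfolding mpoly_eval_def
proof (rule sum_pos)
  show "Poly_Mapping.keys p \<noteq> {}" using assms(2) by (simp add: nnpoly_def)
  fix m assume "m \<in> Poly_Mapping.keys p"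
  then have "0 < Poly_Mapping.lookup p m"
    using nnpoly_nonneg_coeff[OF assms(2), of m] by (simp add: in_keys_iff order.order_iff_strict)
  moreover have "0 < monomial_eval a m"
    unfolding monomial_eval_def using assms(1) by (simp add: prod_pos)
  ultimately show "0 < of_rat (Poly_Mapping.lookup p m) * monomial_eval a m"
    by simp
qed simp

text \<open>Only meaningful at points where some representation has a nonzero denominator;
  elsewhere the value is an arbitrary \<open>SOME\<close>-choice.\<close>
definition fract_eval :: "(nat \<Rightarrow> 'a::field_char_0) \<Rightarrow> rf \<Rightarrow> 'a" where
  "fract_eval a x =
    (SOME r. \<exists>p q. x = Fract p q \<and> mpoly_eval a q \<noteq> 0 \<and> r = mpoly_eval a p / mpoly_eval a q)"

lemma fract_eval_Fract:
  assumes "mpoly_eval a q \<noteq> 0"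
  shows "fract_eval a (Fract p q) = mpoly_eval a p / mpoly_eval a q"
proof -
  obtain p' q' where pq': "Fract p q = Fract p' q'" "mpoly_eval a q' \<noteq> 0"
    and eval: "fract_eval a (Fract p q) = mpoly_eval a p' / mpoly_eval a q'"
    using someI_ex[of "\<lambda>r. \<exists>p' q'. Fract p q = Fract p' q' \<and> mpoly_eval a q' \<noteq> 0 \<and>
      r = mpoly_eval a p' / mpoly_eval a q'"] assms
    unfolding fract_eval_def by blast
  have "q \<noteq> 0" "q' \<noteq> 0"
    using assms pq'(2) by (auto simp: mpoly_eval_zero)
  then have "p * q' = p' * q"
    using pq'(1) by (simp add: eq_fract)
  then have "mpoly_eval a p * mpoly_eval a q' = mpoly_eval a p' * mpoly_eval a q"
    by (metis mpoly_eval_mult)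
  then show ?thesis
    using assms pq'(2) eval by (simp add: frac_eq_eq)
qed

lemma fract_eval_pos:
  fixes a :: "nat \<Rightarrow> 'a::linordered_field"
  assumes a: "\<And>l. 0 < a l" and "x \<in> Qsf n"
  shows "0 < fract_eval a x"
proof -
  obtain p q where pq: "nnpoly n p" "nnpoly n q" "x = Fract p q"
    using assms(2) by (rule Qsf_cases)
  have "0 < mpoly_eval a p" "0 < mpoly_eval a q"
    using mpoly_eval_pos[of a n] a pq by blast+
  then show ?thesis
    by (simp add: pq(3) fract_eval_Fract)
qed

definition semifield_hom_on :: "'a::field set \<Rightarrow> ('a \<Rightarrow> 'b::field) \<Rightarrow> bool" where
  "semifield_hom_on S \<phi> \<longleftrightarrow> 1 \<in> S \<and> \<phi> 1 = 1 \<and>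
     (\<forall>x\<in>S. inverse x \<in> S \<and> \<phi> (inverse x) = inverse (\<phi> x)) \<and>
     (\<forall>x\<in>S. \<forall>y\<in>S. x + y \<in> S \<and> x * y \<in> S \<and> \<phi> (x + y) = \<phi> x + \<phi> y \<and> \<phi> (x * y) = \<phi> x * \<phi> y)"

lemma semifield_hom_on_fract_eval:
  fixes a :: "nat \<Rightarrow> 'a::linordered_field"
  assumes a: "\<And>l. 0 < a l"
  shows "semifield_hom_on (Qsf n) (fract_eval a)"
proof -
  have pos: "0 < mpoly_eval a p" if "nnpoly n p" for p
    using mpoly_eval_pos[of a n p] a that by blast
  have eval_Fract: "fract_eval a (Fract p q) = mpoly_eval a p / mpoly_eval a q" if "nnpoly n q" for p q
    using pos[OF that] by (intro fract_eval_Fract) simp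
  show ?thesis
    unfolding semifield_hom_on_def
  proof (intro conjI ballI)
    show "fract_eval a 1 = 1"
      using eval_Fract[OF nnpoly_one, of 1] by (simp add: One_fract_def mpoly_eval_one)
    fix x assume "x \<in> Qsf n"
    then obtain p q where pq: "nnpoly n p" "nnpoly n q" "x = Fract p q" by (rule Qsf_cases)
    show "fract_eval a (inverse x) = inverse (fract_eval a x)"
      using pq by (simp add: eval_Fract)
    fix y assume "y \<in> Qsf n"
    then obtain p' q' where pq': "nnpoly n p'" "nnpoly n q'" "y = Fract p' q'" by (rule Qsf_cases)
    have nz: "q \<noteq> 0" "q' \<noteq> 0" using pq pq' by (simp_all add: nnpoly_def)
    show "fract_eval a (x * y) = fract_eval a x * fract_eval a y"
      using pq pq' by (simp add: eval_Fract nnpoly_mult mpoly_eval_mult)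
    show "fract_eval a (x + y) = fract_eval a x + fract_eval a y"
      using pq pq' nz pos[OF pq(2)] pos[OF pq'(2)]
      by (simp add: eval_Fract nnpoly_mult mpoly_eval_mult mpoly_eval_add field_simps)
  qed (use Qsf_one Qsf_inverse Qsf_add Qsf_mult in blast)+
qed

lemma fract_eval_yvar: "fract_eval a (yvar l) = a l"
proof -
  have "fract_eval a (yvar l) = mpoly_eval a (Poly_Mapping.single (Poly_Mapping.single l 1) 1) / mpoly_eval a 1"
    unfolding yvar_def by (rule fract_eval_Fract) (simp add: mpoly_eval_one)
  then show ?thesis
    by (simp add: mpoly_eval_single mpoly_eval_one monomial_eval_def)
qed

lemma semifield_hom_on_powi:
  assumes hom: "semifield_hom_on S \<phi>" and x: "x \<in> S"
  shows "x powi k \<in> S \<and> \<phi> (x powi k) = \<phi> x powi k"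
proof -
  have power: "y ^ m \<in> S \<and> \<phi> (y ^ m) = \<phi> y ^ m" if "y \<in> S" for y m
    using hom that by (induction m) (simp_all add: semifield_hom_on_def)
  show ?thesis
    using power[OF x] power[of "inverse x"] hom x
    by (simp add: power_int_def semifield_hom_on_def power_inverse)
qed

section \<open>Mutation of coefficients\<close>

text \<open>The coefficient mutation \<open>mut_y\<close> over an arbitrary field, so that the same formula also
  mutates positive real points.\<close>
definition y_mutation :: "nat \<Rightarrow> (nat \<Rightarrow> 'a::field) \<Rightarrow> (nat \<Rightarrow> nat \<Rightarrow> int) \<Rightarrow> nat \<Rightarrow> 'a" where
  "y_mutation k y B = (\<lambda>i. if i = k then inverse (y k)
     else y i * y k powi pos (B k i) * (1 + y k) powi (- B k i))"

fun y_mutations :: "(nat \<Rightarrow> 'a::field) \<times> (nat \<Rightarrow> nat \<Rightarrow> int) \<Rightarrow> nat list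
    \<Rightarrow> (nat \<Rightarrow> 'a) \<times> (nat \<Rightarrow> nat \<Rightarrow> int)" where
  "y_mutations s [] = s"
| "y_mutations (y, B) (k # ks) = y_mutations (y_mutation k y B, mut_B k B) ks"

lemma mut_seq_eq_y_mutations: "mut_seq s ks = y_mutations s ks"
  by (induction s ks rule: mut_seq.induct) (simp_all add: mut_y_def y_mutation_def)

lemma y_mutation_hom:
  assumes hom: "semifield_hom_on S \<phi>" and "k < n"
    and y: "\<And>l. l < n \<Longrightarrow> y l \<in> S \<and> \<phi> (y l) = z l" and "i < n"
  shows "y_mutation k y B i \<in> S \<and> \<phi> (y_mutation k y B i) = y_mutation k z B i"
proof -
  have yk: "y k \<in> S" "\<phi> (y k) = z k" "1 + y k \<in> S" "\<phi> (1 + y k) = 1 + z k"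
    using y[OF \<open>k < n\<close>] hom by (auto simp: semifield_hom_on_def)
  show ?thesis
    using y[OF \<open>i < n\<close>] yk hom semifield_hom_on_powi[OF hom yk(1)] semifield_hom_on_powi[OF hom yk(3)]
    by (auto simp: y_mutation_def semifield_hom_on_def)
qed

lemma y_mutations_hom:
  assumes hom: "semifield_hom_on S \<phi>" and "set ks \<subseteq> {..<n}"
    and "\<And>l. l < n \<Longrightarrow> y l \<in> S \<and> \<phi> (y l) = z l" and "i < n"
  shows "fst (y_mutations (y, B) ks) i \<in> S \<and> \<phi> (fst (y_mutations (y, B) ks) i) = fst (y_mutations (z, B) ks) i"
  using assms(2-)
proof (induction ks arbitrary: y z B)
  case (Cons k ks)
  then show ?case
    using y_mutation_hom[OF hom, of k n y z] by simp
qed simp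

lemma mut_B_involutive: "mut_B k (mut_B k B) = B"
proof (intro ext)
  fix i j
  have "pos (B i k) = B i k + pos (- B i k)" "pos (B k j) = B k j + pos (- B k j)"
    by (simp_all add: pos_def)
  then show "mut_B k (mut_B k B) i j = B i j"
    by (simp add: mut_B_def algebra_simps)
qed

lemma powi_pos_part_cancel:
  fixes u :: "'a::field"
  assumes "u \<noteq> 0" "1 + u \<noteq> 0"
  shows "u powi pos b * (1 + u) powi (- b) * inverse u powi pos (- b) * (1 + inverse u) powi b = 1"
proof -
  have "1 + inverse u = (1 + u) / u" using assms(1) by (simp add: field_simps)
  then show ?thesis
    using assms by (cases b rule: int_cases2) (simp_all add: pos_def power_int_minus power_divide power_inverse)
qed

lemma y_mutation_involutive:
  fixes y :: "nat \<Rightarrow> 'a::linordered_field"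
  assumes "0 < y k"
  shows "y_mutation k (y_mutation k y B) (mut_B k B) = y"
proof
  fix i
  have "1 + y k \<noteq> 0" using assms by (simp add: add_pos_pos)
  then show "y_mutation k (y_mutation k y B) (mut_B k B) i = y i"
    using powi_pos_part_cancel[of "y k" "B k i"] assms
    by (auto simp: y_mutation_def mut_B_def mult_ac)
qed

lemma y_mutation_pos:
  fixes y :: "nat \<Rightarrow> 'a::linordered_field"
  shows "(\<And>l. 0 < y l) \<Longrightarrow> 0 < y_mutation k y B i"
  by (simp add: y_mutation_def add_pos_pos)

lemma y_mutations_pos:
  fixes y :: "nat \<Rightarrow> 'a::linordered_field"
  shows "(\<And>l. 0 < y l) \<Longrightarrow> 0 < fst (y_mutations (y, B) ks) i"
  by (induction ks arbitrary: y B) (simp_all add: y_mutation_pos)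

lemma y_mutations_append: "y_mutations s (ks @ ks') = y_mutations (y_mutations s ks) ks'"
  by (induction s ks rule: y_mutations.induct) simp_all

lemma snd_y_mutations: "snd (y_mutations (y, B) ks) = snd (y_mutations (y', B) ks)"
  by (induction ks arbitrary: y y' B) simp_all

lemma y_mutations_rev:
  fixes y :: "nat \<Rightarrow> 'a::linordered_field"
  assumes "\<And>l. 0 < y l"
  shows "y_mutations (y_mutations (y, B) ks) (rev ks) = (y, B)"
  using assms
proof (induction ks arbitrary: y B)
  case (Cons k ks)
  have "\<And>l. 0 < y_mutation k y B l" using y_mutation_pos Cons.prems by blast
  then show ?case
    using Cons.IH y_mutation_involutive[OF Cons.prems] by (simp add: y_mutations_append mut_B_involutive)
qed simp

lemma y_mutations_surj:
  fixes z :: "nat \<Rightarrow> 'a::linordered_field"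
  assumes z: "\<And>l. 0 < z l"
  obtains a where "\<And>l. 0 < a l" "fst (y_mutations (a, B) ks) = z"
proof -
  define B' where "B' = snd (y_mutations (z, B) ks)"
  define a where "a = fst (y_mutations (z, B') (rev ks))"
  have "snd (y_mutations (z, B') (rev ks)) = snd (y_mutations (y_mutations (z, B) ks) (rev ks))"
    unfolding B'_def by (metis snd_y_mutations prod.collapse)
  then have "y_mutations (z, B') (rev ks) = (a, B)"
    using y_mutations_rev[of z B ks] z by (simp add: a_def prod_eq_iff)
  then have "fst (y_mutations (a, B) ks) = z"
    using y_mutations_rev[of z B' "rev ks"] z by simp
  moreover have "0 < a l" for l
    unfolding a_def by (rule y_mutations_pos[OF z])
  ultimately show ?thesis using that by blast
qed

section \<open>Coprimality\<close>

fun mkey_less :: "'a::linorder mkey \<Rightarrow> 'a mkey \<Rightarrow> bool" where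
  "mkey_less (MK p \<alpha>) (MK q \<beta>) \<longleftrightarrow> p < q \<or> p = q \<and> \<alpha> < \<beta>"

definition mkeys_over :: "'a::comm_monoid_mult set \<Rightarrow> 'a mkey set" where
  "mkeys_over P = {MK p \<alpha> | p \<alpha>. p \<in> P}"

lemma keys_ZPX_subset: "f \<in> ZPX n P \<Longrightarrow> Poly_Mapping.keys f \<subseteq> mkeys_over P"
proof
  fix k assume "f \<in> ZPX n P" "k \<in> Poly_Mapping.keys f"
  then show "k \<in> mkeys_over P" by (cases k) (auto simp: ZPX_def mkeys_over_def)
qed

lemma compatible_linorder_mkey_less:
  fixes P :: "'a::linordered_idom set"
  assumes P_pos: "\<And>p. p \<in> P \<Longrightarrow> 0 < p"
  shows "compatible_linorder mkey_less (mkeys_over P)"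
  unfolding compatible_linorder_def
proof (intro conjI ballI impI allI)
  show "transp (mkey_less :: 'a mkey \<Rightarrow> _)"
  proof (rule transpI)
    fix x y z :: "'a mkey"
    show "mkey_less x y \<Longrightarrow> mkey_less y z \<Longrightarrow> mkey_less x z"
      by (cases x; cases y; cases z) auto
  qed
  show "irreflp (mkey_less :: 'a mkey \<Rightarrow> _)"
  proof (rule irreflpI)
    fix x :: "'a mkey"
    show "\<not> mkey_less x x" by (cases x) simp
  qed
  show "totalp (mkey_less :: 'a mkey \<Rightarrow> _)"
  proof (rule totalp_onI)
    fix x y :: "'a mkey"
    show "x \<noteq> y \<Longrightarrow> mkey_less x y \<or> mkey_less y x"
      by (cases x; cases y) auto
  qed
  fix x y z assume "x \<in> mkeys_over P" "y \<in> mkeys_over P" "z \<in> mkeys_over P" "mkey_less x y"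
  then show "mkey_less (x + z) (y + z)"
    using P_pos by (auto simp: mkeys_over_def mult_strict_right_mono add_strict_right_mono)
qed

lemma lookup_expv: "Poly_Mapping.lookup (expv n f) l = (if l < n then f l else 0)"
proof -
  have "finite {l. (if l < n then f l else 0) \<noteq> 0}"
    by (rule finite_subset[of _ "{..<n}"]) auto
  then show ?thesis unfolding expv_def by simp
qed

lemma expv_pos_neg_common_summand:
  fixes \<alpha> \<beta> \<beta>' :: "nat \<Rightarrow>\<^sub>0 nat"
  assumes "expv n (\<lambda>l. nat (pos (b l))) = \<alpha> + \<beta>" and "expv n (\<lambda>l. nat (pos (- b l))) = \<alpha> + \<beta>'"
  shows "\<alpha> = 0"
proof (rule poly_mapping_eqI)
  fix l
  have "Poly_Mapping.lookup \<alpha> l \<le> (if l < n then nat (pos (b l)) else 0)"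
    "Poly_Mapping.lookup \<alpha> l \<le> (if l < n then nat (pos (- b l)) else 0)"
    using arg_cong[OF assms(1), of "\<lambda>m. Poly_Mapping.lookup m l"]
      arg_cong[OF assms(2), of "\<lambda>m. Poly_Mapping.lookup m l"]
    by (simp_all add: lookup_expv lookup_add)
  then show "Poly_Mapping.lookup \<alpha> l = Poly_Mapping.lookup 0 l"
    by (auto simp: pos_def split: if_splits)
qed

lemma keys_binomial:
  "Poly_Mapping.keys (Poly_Mapping.single k1 (1::int) + Poly_Mapping.single k2 1) = {k1, k2}"
  by (auto simp: in_keys_iff lookup_add lookup_single when_def split: if_splits)

lemma monomial_factor_of_Ppoly_is_constant:
  assumes Ppoly: "Ppoly n y B i = Poly_Mapping.single (MK p \<alpha>) c * e"
  shows "\<alpha> = 0"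
proof -
  have summand: "\<exists>\<beta>. \<gamma> = \<alpha> + \<beta>" if key: "MK r \<gamma> \<in> Poly_Mapping.keys (Ppoly n y B i)" for r \<gamma>
  proof -
    obtain a b where ab: "MK r \<gamma> = a + b" "a \<in> Poly_Mapping.keys (Poly_Mapping.single (MK p \<alpha>) c)"
      using key keys_mult unfolding Ppoly by blast
    obtain q \<beta> where "b = MK q \<beta>" by (cases b)
    moreover have "a = MK p \<alpha>" using ab(2) by (simp split: if_splits)
    ultimately show ?thesis using ab(1) by auto
  qed
  obtain \<beta> \<beta>' where "expv n (\<lambda>l. nat (pos (B l i))) = \<alpha> + \<beta>"
    "expv n (\<lambda>l. nat (pos (- B l i))) = \<alpha> + \<beta>'"
    using summand summand by (fastforce simp: Ppoly_def keys_binomial)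
  then show ?thesis by (rule expv_pos_neg_common_summand)
qed

lemma Ppoly_monomial_divisor_is_unit:
  assumes d: "d \<in> ZPX n P" and dx: "d = Poly_Mapping.single x c" and "is_unit c"
    and "Ppoly n y B i = d * e"
  shows "d \<in> ZPunits P"
proof -
  have "\<bar>c\<bar> = 1"
    using \<open>is_unit c\<close> by simp
  then have c: "c = 1 \<or> c = -1" by arith
  obtain p \<alpha> where x: "x = MK p \<alpha>" by (cases x)
  have "x \<in> Poly_Mapping.keys d"
    using c by (auto simp: dx)
  then have "p \<in> P"
    using keys_ZPX_subset[OF d] by (auto simp: x mkeys_over_def)
  moreover have "\<alpha> = 0"
    using assms(4) by (intro monomial_factor_of_Ppoly_is_constant[of n y B i p \<alpha> c e]) (simp add: dx x)
  ultimately show ?thesis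
    unfolding ZPunits_def dx x using c by blast
qed

lemma Ppoly_common_divisor_is_unit:
  fixes L :: "rf \<Rightarrow> real"
  assumes P_pos: "\<And>p. p \<in> P \<Longrightarrow> 0 < p"
    and L_mult: "\<And>p q. p \<in> P \<Longrightarrow> q \<in> P \<Longrightarrow> L (p * q) = L p * L q"
    and L_pos: "\<And>p. p \<in> P \<Longrightarrow> 0 < L p"
    and y_P: "\<And>l. l \<in> {i, j} \<Longrightarrow> y l \<in> P \<and> 1 / (1 + y l) \<in> P"
    and L_yi: "1 < L (y i)" and L_yj: "L (y j) = 1"
    and d: "d \<in> ZPX n P"
    and "rdvd (ZPX n P) d (Ppoly n y B i)" "rdvd (ZPX n P) d (Ppoly n y B j)"
  shows "d \<in> ZPunits P"
proof -
  obtain e e' where e: "e \<in> ZPX n P" "Ppoly n y B i = d * e"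
    and e': "e' \<in> ZPX n P" "Ppoly n y B j = d * e'"
    using assms(8,9) by (auto simp: rdvd_def)
  define K where "K = mkeys_over P"
  define level where "level = (\<lambda>k. case k of MK p _ \<Rightarrow> L p)"
  define u where "u = (\<lambda>l. MK (y l / (1 + y l)) (expv n (\<lambda>j. nat (pos (B j l)))))"
  define v where "v = (\<lambda>l. MK (1 / (1 + y l)) (expv n (\<lambda>j. nat (pos (- B j l)))))"
  have Ppoly: "Ppoly n y B l = Poly_Mapping.single (u l) 1 + Poly_Mapping.single (v l) 1" for l
    by (simp add: Ppoly_def u_def v_def)
  have level_u: "level (u l) = L (y l) * level (v l)" if "l \<in> {i, j}" for l
    using y_P[OF that] L_mult[of "y l" "1 / (1 + y l)"] by (simp add: level_def u_def v_def)
  have level_v_pos: "0 < level (v l)" if "l \<in> {i, j}" for l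
    using y_P[OF that] by (simp add: level_def v_def L_pos)
  have lt: "compatible_linorder mkey_less K"
    unfolding K_def by (rule compatible_linorder_mkey_less[OF P_pos])
  have level_add: "level (x + x') = level x * level x'" if "x \<in> K" "x' \<in> K" for x x'
    using that by (auto simp: K_def mkeys_over_def level_def L_mult)
  have level_pos: "0 < level x" if "x \<in> K" for x
    using that by (auto simp: K_def mkeys_over_def level_def L_pos)
  note keys_K = keys_ZPX_subset[where P = P, folded K_def]
  have level_const: "level x = level x'" if "x \<in> Poly_Mapping.keys d" "x' \<in> Poly_Mapping.keys d" for x x'
  proof (rule level_constant_on_keys_of_factor[where level = level, OF lt level_add level_pos
        keys_K[OF d] keys_K[OF e'(1)]])
    show "d * e' \<noteq> 0"
      using keys_binomial[of "u j" "v j"] by (auto simp flip: e'(2) simp: Ppoly)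
    show "level k = level k'" if "k \<in> Poly_Mapping.keys (d * e')" "k' \<in> Poly_Mapping.keys (d * e')" for k k'
      using that level_u[of j] L_yj unfolding e'(2)[symmetric] Ppoly keys_binomial by auto
  qed (use that in blast)+
  have "level (v i) < level (u i)"
    using level_u[of i] level_v_pos[of i] L_yi by simp
  then have "u i \<noteq> v i" by auto
  obtain x c where dx: "d = Poly_Mapping.single x c" and "c dvd Poly_Mapping.lookup (d * e) (u i)"
  proof (rule factor_monomial_if_unique_top_level_key[where level = level, OF lt level_add level_pos
        keys_K[OF d] keys_K[OF e(1)] level_const])
    show "u i \<in> Poly_Mapping.keys (d * e)"
      unfolding e(2)[symmetric] Ppoly keys_binomial by simp
    show "level k' < level (u i)" if "k' \<in> Poly_Mapping.keys (d * e)" "k' \<noteq> u i" for k'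
      using that \<open>level (v i) < level (u i)\<close> unfolding e(2)[symmetric] Ppoly keys_binomial by auto
  qed (assumption+)
  moreover have "Poly_Mapping.lookup (d * e) (u i) = 1"
    using \<open>u i \<noteq> v i\<close> by (simp add: e(2)[symmetric] Ppoly lookup_add lookup_single)
  ultimately show ?thesis
    using Ppoly_monomial_divisor_is_unit[OF d dx _ e(2)] by simp
qed

theorem lemma5p4:
  fixes n :: nat and B0 :: "nat \<Rightarrow> nat \<Rightarrow> int" and ks :: "nat list"
  assumes "skew_symmetrizable n B0"
    and "set ks \<subseteq> {..<n}"
  shows "coprime_seed n (Qsf n) (fst (mut_seq (yvar, B0) ks)) (snd (mut_seq (yvar, B0) ks))"
  unfolding coprime_seed_def mut_seq_eq_y_mutations
proof (intro allI impI ballI, elim conjE)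
  fix i j d
  define y where "y = fst (y_mutations (yvar, B0) ks)"
  assume "i < n" "j < n" "i \<noteq> j" and d: "d \<in> ZPX n (Qsf n)"
    and dvd: "rdvd (ZPX n (Qsf n)) d (Ppoly n (fst (y_mutations (yvar, B0) ks)) (snd (y_mutations (yvar, B0) ks)) i)"
      "rdvd (ZPX n (Qsf n)) d (Ppoly n (fst (y_mutations (yvar, B0) ks)) (snd (y_mutations (yvar, B0) ks)) j)"
  have "0 < (if l = i then 2 else 1 :: real)" for l by simp
  then obtain a :: "nat \<Rightarrow> real" where a: "\<And>l. 0 < a l"
    and a_z: "fst (y_mutations (a, B0) ks) = (\<lambda>l. if l = i then 2 else 1)"
    using y_mutations_surj[where z = "\<lambda>l. if l = i then 2 else 1" and B = B0 and ks = ks] by blast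
  have hom: "semifield_hom_on (Qsf n) (fract_eval a)"
    by (rule semifield_hom_on_fract_eval[OF a])
  have "yvar l \<in> Qsf n \<and> fract_eval a (yvar l) = a l" if "l < n" for l
    using that by (simp add: yvar_in_Qsf fract_eval_yvar)
  then have y: "y l \<in> Qsf n \<and> fract_eval a (y l) = (if l = i then 2 else 1)" if "l < n" for l
    using y_mutations_hom[OF hom assms(2) _ that] by (simp add: y_def a_z)
  show "d \<in> ZPunits (Qsf n)"
  proof (rule Ppoly_common_divisor_is_unit[OF _ _ _ _ _ _ d dvd[folded y_def]])
    show "fract_eval a (p * q) = fract_eval a p * fract_eval a q" if "p \<in> Qsf n" "q \<in> Qsf n" for p q
      using hom that by (simp add: semifield_hom_on_def)
    show "y l \<in> Qsf n \<and> 1 / (1 + y l) \<in> Qsf n" if "l \<in> {i, j}" for l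
      using y[of l] that \<open>i < n\<close> \<open>j < n\<close> by (auto simp: divide_inverse intro: Qsf_inverse Qsf_add Qsf_one)
  qed (use y \<open>i < n\<close> \<open>j < n\<close> \<open>i \<noteq> j\<close> Qsf_pos fract_eval_pos[of a] a in auto)
qed

end
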